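(* Let $0\to(M,\alpha_M)\to(K,\alpha_K)\xrightarrow{\pi}(L,\alpha_L)\to0$ be a central extension of Hom-Leibniz $n$-algebras. If $(K,\alpha_K)$ is perfect and every central extension of $(K,\alpha_K)$ splits, then $\pi$ is a universal central extension.
   Context: Fix a field $\mathbb K$ and $n\ge2$. A (multiplicative) Hom-Leibniz $n$-algebra is a $\mathbb K$-vector space $L$ with an $n$-linear bracket and a linear map $\alpha_L$ preserving the bracket, satisfying $[[x_1,\dots,x_n],\alpha_L(y_1),\dots,\alpha_L(y_{n-1})]=\sum_{i=1}^n[\alpha_L(x_1),\dots,[x_i,y_1,\dots,y_{n-1}],\dots,\alpha_L(x_n)]$. Homomorphisms preserve brackets and commute with twisting maps. Perfect: $K=[K,\dots,K]$. Center $Z(K)$: elements $x$ such that every bracket with $x$ in some position equals $0$. An extension of $L$ is a surjective homomorphism $\pi:K\to L$ with kernel $M$; central if $M\subseteq Z(K)$. An extension $\rho:F\to K$ splits if there is a homomorphism $\sigma:K\to F$ with $\rho\circ\sigma=\mathrm{id}_K$. A central extension $\pi:K\to L$ is universal central if for every central extension $\pi':K'\to L$ there is a unique homomorphism $h:K\to K'$ with $\pi'\circ h=\pi$. *)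

theory Defs
  imports Complex_Main "HOL-Library.Product_Plus"
begin

text \<open>A Hom-Leibniz n-algebra over a field 'a: a carrier set (a subspace of a vector space
  whose addition is that of the ambient type 'v), scalar multiplication, an n-ary bracket
  (taking a list of n arguments) and a twisting map.\<close>

record ('a, 'v) hlalg =
  carrier :: "'v set"
  smul :: "'a \<Rightarrow> 'v \<Rightarrow> 'v"
  brk :: "'v list \<Rightarrow> 'v"
  tw :: "'v \<Rightarrow> 'v"

definition args :: "nat \<Rightarrow> ('a, 'v) hlalg \<Rightarrow> 'v list set" where
  "args k A = {xs. length xs = k \<and> set xs \<subseteq> carrier A}"

definition hom_leibniz :: "nat \<Rightarrow> ('a::field, 'v::ab_group_add) hlalg \<Rightarrow> bool" where
  "hom_leibniz n A \<longleftrightarrow>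
     vector_space (smul A) \<and> module.subspace (smul A) (carrier A) \<and>
     (\<forall>xs \<in> args n A. brk A xs \<in> carrier A) \<and>
     (\<forall>xs \<in> args n A. \<forall>i < n. \<forall>u \<in> carrier A. \<forall>v \<in> carrier A.
        brk A (xs[i := u + v]) = brk A (xs[i := u]) + brk A (xs[i := v])) \<and>
     (\<forall>xs \<in> args n A. \<forall>i < n. \<forall>u \<in> carrier A. \<forall>c.
        brk A (xs[i := smul A c u]) = smul A c (brk A (xs[i := u]))) \<and>
     (\<forall>x \<in> carrier A. tw A x \<in> carrier A) \<and>
     (\<forall>x \<in> carrier A. \<forall>y \<in> carrier A. tw A (x + y) = tw A x + tw A y) \<and>
     (\<forall>x \<in> carrier A. \<forall>c. tw A (smul A c x) = smul A c (tw A x)) \<and>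
     (\<forall>xs \<in> args n A. tw A (brk A xs) = brk A (map (tw A) xs)) \<and>
     (\<forall>xs \<in> args n A. \<forall>ys \<in> args (n - 1) A.
        brk A (brk A xs # map (tw A) ys) =
          (\<Sum>i<n. brk A ((map (tw A) xs)[i := brk A (xs ! i # ys)])))"

definition hl_hom ::
  "nat \<Rightarrow> ('a::field, 'v::ab_group_add) hlalg \<Rightarrow> ('a, 'w::ab_group_add) hlalg \<Rightarrow> ('v \<Rightarrow> 'w) \<Rightarrow> bool" where
  "hl_hom n A B f \<longleftrightarrow>
     (\<forall>x \<in> carrier A. f x \<in> carrier B) \<and>
     (\<forall>x \<in> carrier A. \<forall>y \<in> carrier A. f (x + y) = f x + f y) \<and>
     (\<forall>x \<in> carrier A. \<forall>c. f (smul A c x) = smul B c (f x)) \<and>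
     (\<forall>xs \<in> args n A. f (brk A xs) = brk B (map f xs)) \<and>
     (\<forall>x \<in> carrier A. f (tw A x) = tw B (f x))"

definition perfect :: "nat \<Rightarrow> ('a::field, 'v::ab_group_add) hlalg \<Rightarrow> bool" where
  "perfect n A \<longleftrightarrow> carrier A = module.span (smul A) {brk A xs | xs. xs \<in> args n A}"

definition center :: "nat \<Rightarrow> ('a, 'v::zero) hlalg \<Rightarrow> 'v set" where
  "center n A = {x \<in> carrier A. \<forall>xs \<in> args n A. \<forall>i < n. brk A (xs[i := x]) = 0}"

definition hl_extension ::
  "nat \<Rightarrow> ('a::field, 'v::ab_group_add) hlalg \<Rightarrow> ('a, 'w::ab_group_add) hlalg \<Rightarrow> ('v \<Rightarrow> 'w) \<Rightarrow> bool" where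
  "hl_extension n K L p \<longleftrightarrow>
     hom_leibniz n K \<and> hom_leibniz n L \<and> hl_hom n K L p \<and> p ` carrier K = carrier L"

definition kernel :: "('a, 'v) hlalg \<Rightarrow> ('v \<Rightarrow> 'w::zero) \<Rightarrow> 'v set" where
  "kernel K p = {x \<in> carrier K. p x = 0}"

definition central_extension ::
  "nat \<Rightarrow> ('a::field, 'v::ab_group_add) hlalg \<Rightarrow> ('a, 'w::ab_group_add) hlalg \<Rightarrow> ('v \<Rightarrow> 'w) \<Rightarrow> bool" where
  "central_extension n K L p \<longleftrightarrow> hl_extension n K L p \<and> kernel K p \<subseteq> center n K"

definition splits ::
  "nat \<Rightarrow> ('a::field, 'v::ab_group_add) hlalg \<Rightarrow> ('a, 'w::ab_group_add) hlalg \<Rightarrow> ('v \<Rightarrow> 'w) \<Rightarrow> bool" where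
  "splits n F K r \<longleftrightarrow> (\<exists>s. hl_hom n K F s \<and> (\<forall>x \<in> carrier K. r (s x) = x))"

text \<open>Every central extension of K (with total space on the type 'f) splits.\<close>
definition all_central_ext_split ::
  "nat \<Rightarrow> ('a::field, 'v::ab_group_add) hlalg \<Rightarrow> 'f::ab_group_add itself \<Rightarrow> bool" where
  "all_central_ext_split n K _ \<longleftrightarrow>
     (\<forall>(F :: ('a, 'f) hlalg) r. central_extension n F K r \<longrightarrow> splits n F K r)"

text \<open>Universal central extension, with test extensions K' living on the type 'c.
  Homomorphisms are functions on the whole type, so uniqueness is on the carrier.\<close>
definition universal_central_extension ::
  "nat \<Rightarrow> ('a::field, 'v::ab_group_add) hlalg \<Rightarrow> ('a, 'w::ab_group_add) hlalg \<Rightarrow> ('v \<Rightarrow> 'w)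
     \<Rightarrow> 'c::ab_group_add itself \<Rightarrow> bool" where
  "universal_central_extension n K L p _ \<longleftrightarrow>
     central_extension n K L p \<and>
     (\<forall>(K' :: ('a, 'c) hlalg) p'. central_extension n K' L p' \<longrightarrow>
        (\<exists>h. hl_hom n K K' h \<and> (\<forall>x \<in> carrier K. p' (h x) = p x)) \<and>
        (\<forall>h1 h2. hl_hom n K K' h1 \<and> (\<forall>x \<in> carrier K. p' (h1 x) = p x) \<and>
                 hl_hom n K K' h2 \<and> (\<forall>x \<in> carrier K. p' (h2 x) = p x) \<longrightarrow>
                 (\<forall>x \<in> carrier K. h1 x = h2 x)))"

end

theory Submission
  imports Defs
begin

text \<open>Given a central extension \<open>p': K' \<rightarrow> L\<close>, the pullback of \<open>p'\<close> along \<open>p\<close>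
  is a central extension of \<open>K\<close> by the projection to the first factor; a splitting
  \<open>s\<close> of it yields the lift \<open>snd \<circ> s : K \<rightarrow> K'\<close> over \<open>L\<close>. Two lifts differ by elements
  of \<open>ker p'\<close>, which is central, so they agree on all brackets; since \<open>K\<close> is perfect,
  i.e. spanned by its brackets, they agree everywhere.\<close>

lemma hom_leibniz_vector_space: "hom_leibniz n A \<Longrightarrow> vector_space (smul A)"
  by (simp add: hom_leibniz_def)

lemma hom_leibniz_subspace: "hom_leibniz n A \<Longrightarrow> module.subspace (smul A) (carrier A)"
  by (simp add: hom_leibniz_def)

lemma hom_leibniz_brk_mem: "hom_leibniz n A \<Longrightarrow> xs \<in> args n A \<Longrightarrow> brk A xs \<in> carrier A"
  by (simp add: hom_leibniz_def)

context
  fixes n :: nat and A :: "('a::field, 'v::ab_group_add) hlalg"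
  assumes A: "hom_leibniz n A"
begin

interpretation vector_space "smul A"
  by (rule hom_leibniz_vector_space[OF A])

lemma hom_leibniz_zero_mem: "0 \<in> carrier A"
  using subspace_0[OF hom_leibniz_subspace[OF A]] .

lemma hom_leibniz_add_mem: "x \<in> carrier A \<Longrightarrow> y \<in> carrier A \<Longrightarrow> x + y \<in> carrier A"
  using subspace_add[OF hom_leibniz_subspace[OF A]] .

lemma hom_leibniz_smul_mem: "x \<in> carrier A \<Longrightarrow> smul A c x \<in> carrier A"
  using subspace_scale[OF hom_leibniz_subspace[OF A]] .

lemma hom_leibniz_diff_mem: "x \<in> carrier A \<Longrightarrow> y \<in> carrier A \<Longrightarrow> x - y \<in> carrier A"
  using subspace_diff[OF hom_leibniz_subspace[OF A]] .

end

lemma hl_hom_zero: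
  assumes "hl_hom n A B f" "hom_leibniz n A"
  shows "f 0 = 0"
proof -
  have "f (0 + 0) = f 0 + f 0"
    using assms hom_leibniz_zero_mem unfolding hl_hom_def by blast
  then show ?thesis by simp
qed

lemma hl_hom_diff:
  assumes "hl_hom n A B f" "hom_leibniz n A" "x \<in> carrier A" "y \<in> carrier A"
  shows "f (x - y) = f x - f y"
proof -
  have "f ((x - y) + y) = f (x - y) + f y"
    using assms hom_leibniz_diff_mem unfolding hl_hom_def by blast
  then show ?thesis by (simp add: algebra_simps)
qed

lemma brk_update_zero:
  assumes "hom_leibniz n A" "xs \<in> args n A" "i < n"
  shows "brk A (xs[i := 0]) = 0"
proof -
  have "brk A (xs[i := 0 + 0]) = brk A (xs[i := 0]) + brk A (xs[i := 0])"
    using assms hom_leibniz_zero_mem[OF assms(1)] unfolding hom_leibniz_def by blast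
  then show ?thesis by simp
qed

text \<open>Replace the arguments one position at a time; by multilinearity each replacement
  changes the bracket by a bracket with a central entry, which vanishes.\<close>

lemma brk_eq_take_drop:
  assumes A: "hom_leibniz n A" and ys: "ys \<in> args n A" and zs: "zs \<in> args n A"
    and central: "\<forall>j<n. ys ! j - zs ! j \<in> center n A"
  shows "k \<le> n \<Longrightarrow> brk A ys = brk A (take k zs @ drop k ys)"
proof (induction k)
  case 0
  then show ?case by simp
next
  case (Suc k)
  define ws where "ws = take k zs @ drop k ys"
  have k: "k < n" using Suc.prems by simp
  have len: "length ys = n" "length zs = n" using ys zs by (auto simp: args_def)
  have ws: "ws \<in> args n A"
    unfolding ws_def using ys zs Suc.prems
    by (auto simp: args_def dest: in_set_takeD in_set_dropD)
  have ws_k: "ws ! k = ys ! k"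
    unfolding ws_def using k len by (simp add: nth_append)
  have next_ws: "take (Suc k) zs @ drop (Suc k) ys = ws[k := zs ! k]"
    unfolding ws_def using k len
    by (simp add: list_update_append take_Suc_conv_app_nth Cons_nth_drop_Suc upd_conv_take_nth_drop)
  have z: "zs ! k \<in> carrier A" using zs k len by (auto simp: args_def)
  have c: "ys ! k - zs ! k \<in> center n A" using central k by simp
  then have c_mem: "ys ! k - zs ! k \<in> carrier A" by (simp add: center_def)
  have "brk A ws = brk A (ws[k := zs ! k + (ys ! k - zs ! k)])"
    using ws_k by (metis add.commute diff_add_cancel list_update_id)
  also have "\<dots> = brk A (ws[k := zs ! k]) + brk A (ws[k := ys ! k - zs ! k])"
    using A ws k z c_mem unfolding hom_leibniz_def by blast
  also have "brk A (ws[k := ys ! k - zs ! k]) = 0"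
    using c ws k by (simp add: center_def)
  finally show ?case using Suc next_ws ws_def by simp
qed

lemma brk_eq_if_diff_central:
  assumes "hom_leibniz n A" "ys \<in> args n A" "zs \<in> args n A"
    and "\<forall>j<n. ys ! j - zs ! j \<in> center n A"
  shows "brk A ys = brk A zs"
  using brk_eq_take_drop[OF assms, of n] assms(2,3) by (simp add: args_def)

definition hl_prod :: "('a, 'v) hlalg \<Rightarrow> ('a, 'w) hlalg \<Rightarrow> ('a, 'v \<times> 'w) hlalg" where
  "hl_prod A B = \<lparr>carrier = carrier A \<times> carrier B,
     smul = (\<lambda>c x. (smul A c (fst x), smul B c (snd x))),
     brk = (\<lambda>xs. (brk A (map fst xs), brk B (map snd xs))),
     tw = (\<lambda>x. (tw A (fst x), tw B (snd x)))\<rparr>"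

lemma hl_prod_simps [simp]:
  "carrier (hl_prod A B) = carrier A \<times> carrier B"
  "smul (hl_prod A B) c x = (smul A c (fst x), smul B c (snd x))"
  "brk (hl_prod A B) xs = (brk A (map fst xs), brk B (map snd xs))"
  "tw (hl_prod A B) x = (tw A (fst x), tw B (snd x))"
  by (simp_all add: hl_prod_def)

lemma args_hl_prod:
  "xs \<in> args k (hl_prod A B) \<longleftrightarrow> map fst xs \<in> args k A \<and> map snd xs \<in> args k B"
  by (auto simp: args_def mem_Times_iff)

lemma hom_leibniz_hl_prod:
  assumes A: "hom_leibniz n A" and B: "hom_leibniz n B"
  shows "hom_leibniz n (hl_prod A B)"
proof -
  let ?P = "hl_prod A B"
  have vs: "vector_space (smul ?P)"
    using vector_space.vector_space_assms[OF hom_leibniz_vector_space[OF A]]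
      vector_space.vector_space_assms[OF hom_leibniz_vector_space[OF B]]
    by unfold_locales (simp_all add: prod_eq_iff)
  have sub: "module.subspace (smul ?P) (carrier ?P)"
  proof -
    interpret vector_space "smul ?P" by (rule vs)
    show ?thesis
      by (rule subspaceI)
        (auto simp: zero_prod_def hom_leibniz_zero_mem[OF A] hom_leibniz_zero_mem[OF B] hom_leibniz_add_mem[OF A]
          hom_leibniz_add_mem[OF B] hom_leibniz_smul_mem[OF A] hom_leibniz_smul_mem[OF B])
  qed
  have leibniz:
    "brk ?P (brk ?P xs # map (tw ?P) ys) = (\<Sum>i<n. brk ?P ((map (tw ?P) xs)[i := brk ?P (xs ! i # ys)]))"
    if xs: "xs \<in> args n ?P" and ys: "ys \<in> args (n - 1) ?P" for xs ys
  proof -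
    have len: "length xs = n" using xs by (simp add: args_def)
    have "brk A (brk A (map fst xs) # map (tw A) (map fst ys)) =
        (\<Sum>i<n. brk A ((map (tw A) (map fst xs))[i := brk A (map fst xs ! i # map fst ys)]))"
      "brk B (brk B (map snd xs) # map (tw B) (map snd ys)) =
        (\<Sum>i<n. brk B ((map (tw B) (map snd xs))[i := brk B (map snd xs ! i # map snd ys)]))"
      using A B xs ys unfolding hom_leibniz_def args_hl_prod by blast+
    then show ?thesis
      using len by (simp add: prod_eq_iff fst_sum snd_sum map_update comp_def)
  qed
  show ?thesis
    unfolding hom_leibniz_def
    using vs sub leibniz A B
    by (auto simp: args_hl_prod hom_leibniz_def map_update comp_def)
qed

lemma hom_leibniz_restrict_carrier:
  assumes A: "hom_leibniz n A" and S: "module.subspace (smul A) S" "S \<subseteq> carrier A"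
    and brk_closed: "\<And>xs. xs \<in> args n A \<Longrightarrow> set xs \<subseteq> S \<Longrightarrow> brk A xs \<in> S"
    and tw_closed: "\<And>x. x \<in> S \<Longrightarrow> tw A x \<in> S"
  shows "hom_leibniz n (A\<lparr>carrier := S\<rparr>)"
proof -
  have args_S: "args k (A\<lparr>carrier := S\<rparr>) = {xs \<in> args k A. set xs \<subseteq> S}" for k
    using S(2) by (auto simp: args_def)
  show ?thesis
    using A S brk_closed tw_closed unfolding hom_leibniz_def args_S by (simp add: subset_eq)
qed

definition hl_pullback ::
  "('a, 'v) hlalg \<Rightarrow> ('a, 'w) hlalg \<Rightarrow> ('v \<Rightarrow> 'l) \<Rightarrow> ('w \<Rightarrow> 'l) \<Rightarrow> ('a, 'v \<times> 'w) hlalg" where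
  "hl_pullback A B f g =
     (hl_prod A B)\<lparr>carrier := {x \<in> carrier A \<times> carrier B. f (fst x) = g (snd x)}\<rparr>"

lemma hl_pullback_simps [simp]:
  "carrier (hl_pullback A B f g) = {x \<in> carrier A \<times> carrier B. f (fst x) = g (snd x)}"
  "smul (hl_pullback A B f g) = smul (hl_prod A B)"
  "brk (hl_pullback A B f g) = brk (hl_prod A B)"
  "tw (hl_pullback A B f g) = tw (hl_prod A B)"
  by (simp_all add: hl_pullback_def)

lemma args_hl_pullback:
  assumes "xs \<in> args k (hl_pullback A B f g)"
  shows "map fst xs \<in> args k A" "map snd xs \<in> args k B" "map f (map fst xs) = map g (map snd xs)"
  using assms by (auto simp: args_def intro!: nth_equalityI dest!: nth_mem)

lemma hom_leibniz_hl_pullback: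
  assumes A: "hom_leibniz n A" and B: "hom_leibniz n B"
    and f: "hl_hom n A C f" and g: "hl_hom n B C g"
  shows "hom_leibniz n (hl_pullback A B f g)"
proof -
  let ?P = "hl_prod A B"
  let ?S = "{x \<in> carrier A \<times> carrier B. f (fst x) = g (snd x)}"
  have P: "hom_leibniz n ?P" by (rule hom_leibniz_hl_prod[OF A B])
  interpret vector_space "smul ?P" by (rule hom_leibniz_vector_space[OF P])
  have "subspace ?S"
  proof (rule subspaceI)
    show "0 \<in> ?S"
      using hom_leibniz_zero_mem[OF A] hom_leibniz_zero_mem[OF B]
        hl_hom_zero[OF f A] hl_hom_zero[OF g B] by (simp add: zero_prod_def)
  qed (use f g hom_leibniz_add_mem[OF A] hom_leibniz_add_mem[OF B]
      hom_leibniz_smul_mem[OF A] hom_leibniz_smul_mem[OF B] in \<open>auto simp: hl_hom_def\<close>)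
  moreover have "brk ?P xs \<in> ?S" if "xs \<in> args n ?P" "set xs \<subseteq> ?S" for xs
  proof -
    have "xs \<in> args n (hl_pullback A B f g)"
      using that by (simp add: args_def)
    note xs = args_hl_pullback[OF this]
    show ?thesis
      using xs f g hom_leibniz_brk_mem[OF A xs(1)] hom_leibniz_brk_mem[OF B xs(2)]
      unfolding hl_hom_def by (simp del: map_map)
  qed
  moreover have "tw ?P x \<in> ?S" if "x \<in> ?S" for x
    using that A B f g by (auto simp: hom_leibniz_def hl_hom_def)
  ultimately show ?thesis
    unfolding hl_pullback_def by (intro hom_leibniz_restrict_carrier[OF P]) auto
qed

lemma central_extension_hl_pullback_fst:
  assumes A: "hom_leibniz n A" and f: "hl_hom n A C f" and g: "central_extension n B C g"
  shows "central_extension n (hl_pullback A B f g) A fst"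
proof -
  let ?P = "hl_pullback A B f g"
  have B: "hom_leibniz n B" and g_hom: "hl_hom n B C g" and g_onto: "g ` carrier B = carrier C"
    and g_central: "kernel B g \<subseteq> center n B"
    using g unfolding central_extension_def hl_extension_def by blast+
  have "fst ` carrier ?P = carrier A"
  proof (intro equalityI subsetI)
    fix a assume a: "a \<in> carrier A"
    then have "f a \<in> g ` carrier B" using f g_onto by (simp add: hl_hom_def)
    then obtain b where "b \<in> carrier B" "g b = f a" by (metis imageE)
    then show "a \<in> fst ` carrier ?P" using a by (auto intro!: image_eqI[where x = "(a, b)"])
  qed auto
  moreover have "x \<in> center n ?P" if x: "x \<in> kernel ?P fst" for x
  proof -
    have fst_x: "fst x = 0" and x_mem: "x \<in> carrier ?P"
      using x by (auto simp: kernel_def)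
    then have "snd x \<in> kernel B g"
      using hl_hom_zero[OF f A] by (auto simp: kernel_def)
    then have snd_central: "snd x \<in> center n B" using g_central by blast
    show ?thesis
      unfolding center_def
    proof (intro CollectI conjI ballI allI impI x_mem)
      fix xs i assume xs: "xs \<in> args n ?P" and i: "i < n"
      note xs' = args_hl_pullback[OF xs]
      show "brk ?P (xs[i := x]) = 0"
        using brk_update_zero[OF A xs'(1) i] snd_central xs'(2) i fst_x
        by (simp add: center_def map_update zero_prod_def)
    qed
  qed
  moreover have "hl_hom n ?P A fst" by (simp add: hl_hom_def)
  ultimately show ?thesis
    unfolding central_extension_def hl_extension_def kernel_def
    using hom_leibniz_hl_pullback[OF A B f g_hom] A by blast
qed

lemma central_extension_lift_exists:
  fixes K :: "('a::field, 'k::ab_group_add) hlalg" and K' :: "('a, 'c::ab_group_add) hlalg"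
  assumes p: "central_extension n K L p" and p': "central_extension n K' L p'"
    and split: "all_central_ext_split n K TYPE('k \<times> 'c)"
  shows "\<exists>h. hl_hom n K K' h \<and> (\<forall>x \<in> carrier K. p' (h x) = p x)"
proof -
  have K: "hom_leibniz n K" and p_hom: "hl_hom n K L p"
    using p unfolding central_extension_def hl_extension_def by blast+
  let ?P = "hl_pullback K K' p p'"
  obtain s where s: "hl_hom n K ?P s" and fst_s: "\<forall>x \<in> carrier K. fst (s x) = x"
    using split central_extension_hl_pullback_fst[OF K p_hom p']
    unfolding all_central_ext_split_def splits_def by blast
  have s_mem: "\<forall>x \<in> carrier K. s x \<in> carrier ?P" using s by (simp add: hl_hom_def)
  have "hl_hom n K K' (snd \<circ> s)"
    using s s_mem unfolding hl_hom_def by (auto simp: comp_def)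
  moreover have "\<forall>x \<in> carrier K. p' ((snd \<circ> s) x) = p x"
    using s_mem fst_s by auto
  ultimately show ?thesis by blast
qed

lemma hl_hom_eq_on_perfect:
  assumes K: "hom_leibniz n K" and perfect: "perfect n K"
    and h1: "hl_hom n K B h1" and h2: "hl_hom n K B h2"
    and eq_brk: "\<And>xs. xs \<in> args n K \<Longrightarrow> h1 (brk K xs) = h2 (brk K xs)"
  shows "\<forall>x \<in> carrier K. h1 x = h2 x"
proof -
  interpret vector_space "smul K" by (rule hom_leibniz_vector_space[OF K])
  let ?S = "{x \<in> carrier K. h1 x = h2 x}"
  have "subspace ?S"
  proof (rule subspaceI)
    show "0 \<in> ?S"
      using hom_leibniz_zero_mem[OF K] hl_hom_zero[OF h1 K] hl_hom_zero[OF h2 K] by simp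
  qed (use h1 h2 hom_leibniz_add_mem[OF K] hom_leibniz_smul_mem[OF K] in \<open>auto simp: hl_hom_def\<close>)
  moreover have "{brk K xs | xs. xs \<in> args n K} \<subseteq> ?S"
    using eq_brk hom_leibniz_brk_mem[OF K] by auto
  ultimately have "span {brk K xs | xs. xs \<in> args n K} \<subseteq> ?S"
    by (rule span_minimal[rotated])
  then have "carrier K \<subseteq> ?S"
    using perfect unfolding perfect_def by simp
  then show ?thesis by blast
qed

lemma central_extension_lifts_diff_central:
  assumes K: "hom_leibniz n K" and p': "central_extension n K' L p'"
    and h1: "hl_hom n K K' h1" and h2: "hl_hom n K K' h2"
    and eq: "p' (h1 x) = p' (h2 x)" and x: "x \<in> carrier K"
  shows "h1 x - h2 x \<in> center n K'"
proof -
  have K': "hom_leibniz n K'" and p'_hom: "hl_hom n K' L p'" and central: "kernel K' p' \<subseteq> center n K'"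
    using p' unfolding central_extension_def hl_extension_def by blast+
  have mem: "h1 x \<in> carrier K'" "h2 x \<in> carrier K'"
    using h1 h2 x by (simp_all add: hl_hom_def)
  then have "h1 x - h2 x \<in> kernel K' p'"
    using hl_hom_diff[OF p'_hom K'] hom_leibniz_diff_mem[OF K'] eq by (simp add: kernel_def)
  then show ?thesis using central by blast
qed

lemma central_extension_lift_unique:
  assumes K: "hom_leibniz n K" and perfect: "perfect n K" and p': "central_extension n K' L p'"
    and h1: "hl_hom n K K' h1" and h2: "hl_hom n K K' h2"
    and eq: "\<forall>x \<in> carrier K. p' (h1 x) = p' (h2 x)"
  shows "\<forall>x \<in> carrier K. h1 x = h2 x"
proof (rule hl_hom_eq_on_perfect[OF K perfect h1 h2])
  fix xs assume xs: "xs \<in> args n K"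
  have K': "hom_leibniz n K'"
    using p' unfolding central_extension_def hl_extension_def by blast
  have "\<forall>j<n. map h1 xs ! j - map h2 xs ! j \<in> center n K'"
    using central_extension_lifts_diff_central[OF K p' h1 h2] eq xs
    by (auto simp: args_def intro: subsetD[OF _ nth_mem])
  moreover have "map h1 xs \<in> args n K'" "map h2 xs \<in> args n K'"
    using h1 h2 xs by (auto simp: args_def hl_hom_def)
  ultimately have "brk K' (map h1 xs) = brk K' (map h2 xs)"
    using brk_eq_if_diff_central[OF K'] by blast
  then show "h1 (brk K xs) = h2 (brk K xs)"
    using h1 h2 xs by (simp add: hl_hom_def)
qed

(* The argument works for every arity. *)

theorem theorem3p11:
  fixes n :: nat
    and K :: "('a::field, 'k::ab_group_add) hlalg"
    and L :: "('a, 'l::ab_group_add) hlalg"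
    and p :: "'k \<Rightarrow> 'l"
  assumes "n \<ge> 2"
    and "central_extension n K L p"
    and "perfect n K"
    and "all_central_ext_split n K TYPE('k \<times> 'c::ab_group_add)"
  shows "universal_central_extension n K L p TYPE('c)"
proof -
  have K: "hom_leibniz n K"
    using assms(2) unfolding central_extension_def hl_extension_def by blast
  have "\<exists>h. hl_hom n K K' h \<and> (\<forall>x \<in> carrier K. p' (h x) = p x)"
    and "\<forall>h1 h2. hl_hom n K K' h1 \<and> (\<forall>x \<in> carrier K. p' (h1 x) = p x) \<and>
           hl_hom n K K' h2 \<and> (\<forall>x \<in> carrier K. p' (h2 x) = p x) \<longrightarrow>
           (\<forall>x \<in> carrier K. h1 x = h2 x)"
    if p': "central_extension n K' L p'" for K' :: "('a, 'c) hlalg" and p'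
    using central_extension_lift_exists[OF assms(2) p' assms(4)]
      central_extension_lift_unique[OF K assms(3) p'] by auto
  then show ?thesis
    unfolding universal_central_extension_def using assms(2) by blast
qed

end
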